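(* Let $\mathcal{I}$ be the set of channels $\rho\mapsto U\rho U^\dagger$ with $U=H^{\otimes n}DH^{\otimes n}$, where $D$ is a product of gates from $\{Z,CZ\}$ (acting on arbitrary qubits/pairs of qubits) containing at least one $CZ$ gate. There is an absolute constant $C$ such that for every sample $S=(z_1,\ldots,z_m)$ with $z_i\in\mathbb{F}_2^n\times\mathbb{F}_2^n$, \[ \hat{R}_S(\mathcal{F}(\mathcal{I}))\le\frac{C\,n}{\sqrt m}\max_{\Phi\in\mathcal{I}}\|\vec f_\Phi\|_\infty . \]
   Context: $H$ is the Hadamard gate, $Z=\mathrm{diag}(1,-1)$, $CZ$ the controlled-$Z$ gate. For a channel $\Phi$ on $n$ qubits, $f_\Phi(x,y)=\mathrm{Tr}[\Phi(|x\rangle\langle x|)\,|y\rangle\langle y|]$ for $x,y\in\mathbb{F}_2^n$; $\mathcal{F}(\Omega)=\{f_\Phi:\Phi\in\Omega\}$; $\vec f_\Phi=(f_\Phi(z_1),\ldots,f_\Phi(z_m))$. Empirical Rademacher complexity: $\hat{R}_S(\mathcal{G})=\mathbb{E}_{\epsilon}[\sup_{g\in\mathcal{G}}\frac1m\sum_i\epsilon_i g(z_i)]$, $\epsilon_i$ i.i.d. uniform on $\{\pm1\}$. *)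

theory Defs
  imports Complex_Main
begin

text \<open>Computational basis states of n qubits: bit strings x in F_2^n, as bool lists of length n.\<close>
type_synonym bits = "bool list"

definition bitvecs :: "nat \<Rightarrow> bits set" where
  "bitvecs n = {xs. length xs = n}"

type_synonym qmat = "bits \<Rightarrow> bits \<Rightarrow> complex"

definition mmul :: "nat \<Rightarrow> qmat \<Rightarrow> qmat \<Rightarrow> qmat" where
  "mmul n A B = (\<lambda>y x. \<Sum>z\<in>bitvecs n. A y z * B z x)"

definition adj :: "qmat \<Rightarrow> qmat" where
  "adj A = (\<lambda>y x. cnj (A x y))"

definition idm :: qmat where
  "idm = (\<lambda>y x. if y = x then 1 else 0)"

definition ketbra :: "bits \<Rightarrow> qmat" where
  "ketbra v = (\<lambda>y x. if y = v \<and> x = v then 1 else 0)"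

definition mtrace :: "nat \<Rightarrow> qmat \<Rightarrow> complex" where
  "mtrace n A = (\<Sum>x\<in>bitvecs n. A x x)"

text \<open>H tensor n: entries (-1)^(x.y) / sqrt(2^n).\<close>
definition Hn :: "nat \<Rightarrow> qmat" where
  "Hn n = (\<lambda>y x. complex_of_real
      ((-1) ^ card {i. i < n \<and> y ! i \<and> x ! i} / sqrt (2 ^ n)))"

text \<open>Gates: Z on qubit i, CZ on qubits i,j (0-based).\<close>
datatype gate = GZ nat | GCZ nat nat

fun valid_gate :: "nat \<Rightarrow> gate \<Rightarrow> bool" where
  "valid_gate n (GZ i) = (i < n)"
| "valid_gate n (GCZ i j) = (i < n \<and> j < n \<and> i \<noteq> j)"

fun is_CZ :: "gate \<Rightarrow> bool" where
  "is_CZ (GZ _) = False"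
| "is_CZ (GCZ _ _) = True"

fun gate_mat :: "gate \<Rightarrow> qmat" where
  "gate_mat (GZ i) = (\<lambda>y x. if y = x then (if x ! i then -1 else 1) else 0)"
| "gate_mat (GCZ i j) = (\<lambda>y x. if y = x then (if x ! i \<and> x ! j then -1 else 1) else 0)"

definition D_of :: "nat \<Rightarrow> gate list \<Rightarrow> qmat" where
  "D_of n gs = foldr (\<lambda>g A. mmul n (gate_mat g) A) gs idm"

definition U_of :: "nat \<Rightarrow> gate list \<Rightarrow> qmat" where
  "U_of n gs = mmul n (mmul n (Hn n) (D_of n gs)) (Hn n)"

definition unitary_channel :: "nat \<Rightarrow> qmat \<Rightarrow> (qmat \<Rightarrow> qmat)" where
  "unitary_channel n U = (\<lambda>\<rho>. mmul n (mmul n U \<rho>) (adj U))"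

definition chanI :: "nat \<Rightarrow> (qmat \<Rightarrow> qmat) set" where
  "chanI n = {unitary_channel n (U_of n gs) | gs.
      (\<forall>g\<in>set gs. valid_gate n g) \<and> (\<exists>g\<in>set gs. is_CZ g)}"

definition fPhi :: "nat \<Rightarrow> (qmat \<Rightarrow> qmat) \<Rightarrow> bits \<times> bits \<Rightarrow> real" where
  "fPhi n \<Phi> z = Re (mtrace n (mmul n (\<Phi> (ketbra (fst z))) (ketbra (snd z))))"

definition Fclass :: "nat \<Rightarrow> (bits \<times> bits \<Rightarrow> real) set" where
  "Fclass n = fPhi n ` chanI n"

text \<open>Empirical Rademacher complexity: expectation over uniform eps in {+-1}^m,
  encoded by bool lists of length m (True = +1).\<close>
definition sgn_bit :: "bool \<Rightarrow> real" where
  "sgn_bit b = (if b then 1 else -1)"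

definition emp_rademacher :: "'z list \<Rightarrow> ('z \<Rightarrow> real) set \<Rightarrow> real" where
  "emp_rademacher S G =
     (\<Sum>eps\<in>bitvecs (length S).
        (SUP g\<in>G. (1 / real (length S)) * (\<Sum>i<length S. sgn_bit (eps ! i) * g (S ! i))))
     / 2 ^ length S"

end

theory Submission
  imports Defs "HOL-Analysis.Convex"
begin

(* Every D is diagonal with entries +-1: Z on qubit i contributes (-1)^(x_i) and CZ on qubits i, j
   contributes (-1)^(x_i x_j). These factors are involutions, so D only depends on the set of pairs
   (i, j) that occur an odd number of times, and the class has at most 2^(n^2) channels.
   Massart's finite class lemma, proved from the sub-Gaussian bound cosh t <= exp (t^2/2) for
   Rademacher signs and Jensen's inequality for exp, then bounds the Rademacher complexity by
   M sqrt (2 n^2) / sqrt m = sqrt 2 n M / sqrt m, where M is the largest |f_Phi| on the sample. *)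

lemma power2_times_fact_le_fact_double: "2 ^ k * fact k \<le> (fact (2 * k) :: real)"
proof (induction k)
  case 0
  then show ?case by simp
next
  case (Suc k)
  have "(2::real) * of_nat (k + 1) \<le> of_nat (2 * k + 2) * of_nat (2 * k + 1)"
    by (simp add: algebra_simps)
  then have "(2 * of_nat (k + 1)) * (2 ^ k * fact k)
      \<le> (of_nat (2 * k + 2) * of_nat (2 * k + 1)) * (fact (2 * k) :: real)"
    by (rule mult_mono[OF _ Suc.IH]) auto
  then show ?case
    by (simp add: algebra_simps)
qed

lemma cosh_le_exp_half_square: "cosh (x::real) \<le> exp (x\<^sup>2 / 2)"
proof -
  have term_le: "x ^ (2 * k) / fact (2 * k) \<le> (x\<^sup>2 / 2) ^ k / fact k" for k
  proof -
    have "(x\<^sup>2) ^ k / fact (2 * k) \<le> (x\<^sup>2) ^ k / (2 ^ k * fact k)"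
      by (rule divide_left_mono[OF power2_times_fact_le_fact_double]) simp_all
    then show ?thesis
      by (simp add: power_mult power_divide)
  qed
  have "(if even n then x ^ n /\<^sub>R fact n else 0)
      \<le> (if even n then (x\<^sup>2 / 2) ^ (n div 2) /\<^sub>R fact (n div 2) else 0)" for n
  proof (cases "even n")
    case True
    then obtain k where "n = 2 * k" by blast
    then show ?thesis
      using term_le[of k] by (simp only: real_scaleR_def divide_inverse_commute) simp
  qed simp
  moreover have "(\<lambda>n. if even n then (x\<^sup>2 / 2) ^ (n div 2) /\<^sub>R fact (n div 2) else 0)
      sums exp (x\<^sup>2 / 2)"
    using sums_if[OF sums_zero exp_converges[of "x\<^sup>2 / 2"]] by simp
  ultimately show ?thesis
    by (rule sums_le[OF _ cosh_converges])
qed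

lemma bitvecs_Suc: "bitvecs (Suc m) = (\<lambda>(b, xs). b # xs) ` (UNIV \<times> bitvecs m)"
  by (auto simp: bitvecs_def image_iff length_Suc_conv)

lemma finite_bitvecs: "finite (bitvecs m)"
  using finite_lists_length_eq[of "UNIV :: bool set" m] by (simp add: bitvecs_def)

lemma card_bitvecs: "card (bitvecs m) = 2 ^ m"
  using card_lists_length_eq[of "UNIV :: bool set" m] by (simp add: bitvecs_def)

lemma bitvecs_nonempty: "bitvecs m \<noteq> {}"
  using card_bitvecs[of m] by auto

lemma sum_exp_rademacher_le:
  "(\<Sum>eps\<in>bitvecs m. exp (\<Sum>i<m. sgn_bit (eps ! i) * c i)) \<le> 2 ^ m * exp ((\<Sum>i<m. (c i)\<^sup>2) / 2)"
proof (induction m arbitrary: c)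
  case 0
  then show ?case by (simp add: bitvecs_def)
next
  case (Suc m)
  define E where "E = (\<Sum>xs\<in>bitvecs m. exp (\<Sum>i<m. sgn_bit (xs ! i) * c (Suc i)))"
  have inj: "inj_on (\<lambda>(b, xs). b # xs) (UNIV \<times> bitvecs m)"
    by (auto simp: inj_on_def)
  have "(\<Sum>eps\<in>bitvecs (Suc m). exp (\<Sum>i<Suc m. sgn_bit (eps ! i) * c i))
      = (\<Sum>(b, xs)\<in>UNIV \<times> bitvecs m. exp (sgn_bit b * c 0) * exp (\<Sum>i<m. sgn_bit (xs ! i) * c (Suc i)))"
    unfolding bitvecs_Suc sum.reindex[OF inj]
    by (intro sum.cong refl) (auto simp: sum.lessThan_Suc_shift exp_add simp del: sum.lessThan_Suc)
  also have "\<dots> = (\<Sum>b\<in>UNIV. exp (sgn_bit b * c 0) * E)"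
    by (simp add: sum.cartesian_product[symmetric] E_def sum_distrib_left)
  also have "\<dots> = 2 * cosh (c 0) * E"
    by (simp add: UNIV_bool sgn_bit_def cosh_def algebra_simps)
  also have "\<dots> \<le> (2 * exp ((c 0)\<^sup>2 / 2)) * (2 ^ m * exp ((\<Sum>i<m. (c (Suc i))\<^sup>2) / 2))"
    using cosh_le_exp_half_square Suc.IH[of "c \<circ> Suc"]
    by (intro mult_mono) (auto simp: E_def intro: sum_nonneg)
  also have "\<dots> = 2 ^ Suc m * exp ((\<Sum>i<Suc m. (c i)\<^sup>2) / 2)"
    by (simp add: sum.lessThan_Suc_shift add_divide_distrib exp_add del: sum.lessThan_Suc)
  finally show ?case .
qed

lemma exp_mean_le_mean_exp:
  fixes y :: "'a \<Rightarrow> real"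
  assumes "finite E" "E \<noteq> {}"
  shows "exp ((\<Sum>e\<in>E. y e) / card E) \<le> (\<Sum>e\<in>E. exp (y e)) / card E"
  using convex_on_sum[OF assms exp_convex, of "\<lambda>_. 1 / card E" y] assms
  by (simp add: sum_divide_distrib)

lemma finite_SUP_attained:
  fixes f :: "'a \<Rightarrow> 'b::conditionally_complete_linorder"
  assumes "finite G" "G \<noteq> {}"
  obtains g where "g \<in> G" "(SUP g\<in>G. f g) = f g"
proof -
  have "Max (f ` G) \<in> f ` G"
    using assms by (intro Max_in) auto
  then obtain g where "g \<in> G" "Max (f ` G) = f g"
    by blast
  then show ?thesis
    using that cSup_eq_Max[of "f ` G"] assms by simp
qed

lemma exp_emp_rademacher_le:
  fixes G :: "('z \<Rightarrow> real) set" and S :: "'z list" and l M :: real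
  assumes fin: "finite G" and ne: "G \<noteq> {}" and S: "S \<noteq> []" and l: "l > 0"
    and bd: "\<And>g i. g \<in> G \<Longrightarrow> i < length S \<Longrightarrow> \<bar>g (S ! i)\<bar> \<le> M"
  shows "exp (l * length S * emp_rademacher S G) \<le> card G * exp (length S * (l * M)\<^sup>2 / 2)"
proof -
  define m where "m = length S"
  define a where "a g eps = (\<Sum>i<m. sgn_bit (eps ! i) * g (S ! i))" for g eps
  define R where "R eps = (SUP g\<in>G. 1 / real m * a g eps)" for eps
  have m: "real m > 0"
    using S by (simp add: m_def)
  have emp: "l * m * emp_rademacher S G = (\<Sum>eps\<in>bitvecs m. l * m * R eps) / card (bitvecs m)"
    by (simp add: emp_rademacher_def R_def a_def m_def card_bitvecs sum_distrib_left)
  have R_le: "exp (l * m * R eps) \<le> (\<Sum>g\<in>G. exp (l * a g eps))" for eps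
  proof -
    obtain g where g: "g \<in> G" "R eps = 1 / real m * a g eps"
      using finite_SUP_attained[OF fin ne] unfolding R_def by metis
    then have "exp (l * m * R eps) = exp (l * a g eps)"
      using m by simp
    also have "\<dots> \<le> (\<Sum>g\<in>G. exp (l * a g eps))"
      using fin g by (intro member_le_sum) auto
    finally show ?thesis .
  qed
  have mgf: "(\<Sum>eps\<in>bitvecs m. exp (l * a g eps)) / card (bitvecs m) \<le> exp (m * (l * M)\<^sup>2 / 2)"
    if g: "g \<in> G" for g
  proof -
    have "(l * g (S ! i))\<^sup>2 \<le> (l * M)\<^sup>2" if "i < m" for i
      using bd[OF g, of i] that l by (simp add: m_def abs_le_square_iff[symmetric] abs_mult)
    then have sq_sum: "(\<Sum>i<m. (l * g (S ! i))\<^sup>2) \<le> m * (l * M)\<^sup>2"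
      using sum_mono[of "{..<m}" "\<lambda>i. (l * g (S ! i))\<^sup>2" "\<lambda>_. (l * M)\<^sup>2"] by simp
    have "(\<Sum>eps\<in>bitvecs m. exp (l * a g eps))
        = (\<Sum>eps\<in>bitvecs m. exp (\<Sum>i<m. sgn_bit (eps ! i) * (l * g (S ! i))))"
      by (simp add: a_def sum_distrib_left mult.left_commute)
    also have "\<dots> \<le> 2 ^ m * exp ((\<Sum>i<m. (l * g (S ! i))\<^sup>2) / 2)"
      by (rule sum_exp_rademacher_le)
    also have "\<dots> \<le> 2 ^ m * exp (m * (l * M)\<^sup>2 / 2)"
      using sq_sum by simp
    finally show ?thesis
      by (simp add: card_bitvecs field_simps)
  qed
  have "exp (l * m * emp_rademacher S G) \<le> (\<Sum>eps\<in>bitvecs m. exp (l * m * R eps)) / card (bitvecs m)"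
    unfolding emp by (rule exp_mean_le_mean_exp[OF finite_bitvecs bitvecs_nonempty])
  also have "\<dots> \<le> (\<Sum>eps\<in>bitvecs m. \<Sum>g\<in>G. exp (l * a g eps)) / card (bitvecs m)"
    by (intro divide_right_mono sum_mono R_le) simp
  also have "\<dots> = (\<Sum>g\<in>G. (\<Sum>eps\<in>bitvecs m. exp (l * a g eps)) / card (bitvecs m))"
    by (simp add: sum.swap[of _ G] sum_divide_distrib)
  also have "\<dots> \<le> (\<Sum>g\<in>G. exp (m * (l * M)\<^sup>2 / 2))"
    by (intro sum_mono mgf)
  finally show ?thesis
    by (simp add: m_def)
qed

lemma massart_finite_class:
  fixes G :: "('z \<Rightarrow> real) set" and S :: "'z list" and M :: real
  assumes fin: "finite G" and ne: "G \<noteq> {}" and card: "card G \<le> 2 ^ k" and k: "k > 0"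
    and S: "S \<noteq> []"
    and bd: "\<And>g i. g \<in> G \<Longrightarrow> i < length S \<Longrightarrow> \<bar>g (S ! i)\<bar> \<le> M"
  shows "emp_rademacher S G \<le> sqrt (2 * real k) * M / sqrt (length S)"
proof -
  define m where "m = length S"
  have m: "real m > 0"
    using S by (simp add: m_def)
  obtain g0 where "g0 \<in> G"
    using ne by blast
  then have M: "M \<ge> 0"
    using bd[of g0 0] S by force
  show ?thesis
  proof (cases "M = 0")
    case True
    then have "(\<Sum>i<m. sgn_bit (eps ! i) * g (S ! i)) = 0" if "g \<in> G" for g eps
      using bd[OF that] by (simp add: m_def)
    then show ?thesis
      using ne True by (simp add: emp_rademacher_def m_def[symmetric] cong: SUP_cong)
  next
    case False
    define l where "l = sqrt (2 * real k) / (M * sqrt m)"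
    have l: "l > 0"
      using False M m k by (simp add: l_def)
    have "real (card G) \<le> 2 ^ k"
      using card by (metis of_nat_le_iff of_nat_numeral of_nat_power)
    also have "(2::real) ^ k \<le> exp k"
      using power_mono[OF exp_ge_add_one_self[of 1], of k] by (simp add: exp_of_nat_mult[symmetric])
    finally have card_le: "real (card G) \<le> exp k" .
    have "exp (l * m * emp_rademacher S G) \<le> card G * exp (m * (l * M)\<^sup>2 / 2)"
      using exp_emp_rademacher_le[OF fin ne S l] bd unfolding m_def by blast
    also have "\<dots> \<le> exp k * exp (m * (l * M)\<^sup>2 / 2)"
      using card_le by simp
    also have "m * (l * M)\<^sup>2 / 2 = k"
      using False m by (simp add: l_def power_divide power_mult_distrib)
    finally have "l * m * emp_rademacher S G \<le> 2 * k"
      by (simp add: exp_add[symmetric])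
    then have "emp_rademacher S G \<le> 2 * k / (l * m)"
      using l m by (simp add: pos_le_divide_eq mult.commute)
    also have "2 * k / (l * m) = sqrt (2 * real k) * M / sqrt m"
      using False m k by (simp add: l_def field_simps real_sqrt_mult_self)
    finally show ?thesis
      by (simp add: m_def)
  qed
qed

definition diag :: "(bits \<Rightarrow> complex) \<Rightarrow> qmat" where
  "diag s = (\<lambda>y x. if y = x then s x else 0)"

definition pair_sign :: "nat \<times> nat \<Rightarrow> bits \<Rightarrow> complex" where
  "pair_sign p x = (if x ! fst p \<and> x ! snd p then -1 else 1)"

(* Z on qubit i is the sign (-1)^(x_i x_i), so both gate types are signs of a pair of qubits. *)
fun gate_pair :: "gate \<Rightarrow> nat \<times> nat" where
  "gate_pair (GZ i) = (i, i)"
| "gate_pair (GCZ i j) = (i, j)"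

lemma gate_mat_eq_diag: "gate_mat g = diag (pair_sign (gate_pair g))"
  by (cases g) (auto simp: diag_def pair_sign_def fun_eq_iff)

lemma gate_pair_valid: "valid_gate n g \<Longrightarrow> gate_pair g \<in> {..<n} \<times> {..<n}"
  by (cases g) auto

lemma mmul_diag_left:
  assumes "y \<in> bitvecs n"
  shows "mmul n (diag s) A y x = s y * A y x"
proof -
  have "mmul n (diag s) A y x = (\<Sum>z\<in>bitvecs n. if z = y then s y * A y x else 0)"
    unfolding mmul_def by (intro sum.cong) (auto simp: diag_def)
  then show ?thesis
    using assms finite_bitvecs by simp
qed

lemma mmul_cong_right:
  assumes "\<And>z x. z \<in> bitvecs n \<Longrightarrow> B z x = B' z x"
  shows "mmul n A B = mmul n A B'"
  using assms by (simp add: mmul_def)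

lemma D_of_row_eq_diag:
  assumes "y \<in> bitvecs n"
  shows "D_of n gs y x = diag (\<lambda>x. \<Prod>g\<leftarrow>gs. pair_sign (gate_pair g) x) y x"
proof (induction gs arbitrary: x)
  case Nil
  show ?case by (simp add: D_of_def idm_def diag_def)
next
  case (Cons g gs)
  have "D_of n (g # gs) y x = mmul n (diag (pair_sign (gate_pair g))) (D_of n gs) y x"
    by (simp add: D_of_def gate_mat_eq_diag)
  also have "\<dots> = pair_sign (gate_pair g) y * D_of n gs y x"
    by (rule mmul_diag_left[OF assms])
  finally show ?case
    using Cons.IH by (simp add: diag_def)
qed

definition hadamard_conj :: "nat \<Rightarrow> (bits \<Rightarrow> complex) \<Rightarrow> qmat" where
  "hadamard_conj n s = mmul n (mmul n (Hn n) (diag s)) (Hn n)"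

lemma U_of_eq_hadamard_conj:
  "U_of n gs = hadamard_conj n (\<lambda>x. \<Prod>g\<leftarrow>gs. pair_sign (gate_pair g) x)"
  unfolding U_of_def hadamard_conj_def by (simp add: mmul_cong_right[OF D_of_row_eq_diag])

lemma prod_list_involutions_eq_prod_subset:
  fixes s :: "'k \<Rightarrow> 'x \<Rightarrow> 'a::comm_monoid_mult"
  assumes inv: "\<And>k x. s k x * s k x = 1"
  shows "\<exists>T \<subseteq> set ks. (\<lambda>x. \<Prod>k\<leftarrow>ks. s k x) = (\<lambda>x. \<Prod>k\<in>T. s k x)"
proof (induction ks)
  case Nil
  show ?case by simp
next
  case (Cons k ks)
  then obtain T where T: "T \<subseteq> set ks" "(\<lambda>x. \<Prod>k\<leftarrow>ks. s k x) = (\<lambda>x. \<Prod>k\<in>T. s k x)"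
    by blast
  have fin: "finite T"
    using T(1) finite_subset by blast
  define T' where "T' = (if k \<in> T then T - {k} else insert k T)"
  have "s k x * (\<Prod>k\<in>T. s k x) = (\<Prod>k\<in>T'. s k x)" for x
  proof (cases "k \<in> T")
    case True
    then have "s k x * (\<Prod>k\<in>T. s k x) = (s k x * s k x) * (\<Prod>k\<in>T - {k}. s k x)"
      using fin by (simp add: prod.remove mult.assoc)
    then show ?thesis
      using True by (simp add: T'_def inv)
  next
    case False
    then show ?thesis
      using fin by (simp add: T'_def)
  qed
  moreover have "T' \<subseteq> set (k # ks)"
    using T(1) by (auto simp: T'_def)
  ultimately show ?case
    using T(2) by (intro exI[of _ T']) (simp add: fun_eq_iff)
qed

lemma chanI_subset:
  "chanI n \<subseteq> (\<lambda>T. unitary_channel n (hadamard_conj n (\<lambda>x. \<Prod>p\<in>T. pair_sign p x)))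
      ` Pow ({..<n} \<times> {..<n})"
proof
  fix \<Phi> assume "\<Phi> \<in> chanI n"
  then obtain gs where \<Phi>: "\<Phi> = unitary_channel n (U_of n gs)"
    and valid: "\<forall>g\<in>set gs. valid_gate n g"
    unfolding chanI_def by blast
  have "pair_sign p x * pair_sign p x = 1" for p x
    by (simp add: pair_sign_def)
  then obtain T where T: "T \<subseteq> set (map gate_pair gs)"
    "(\<lambda>x. \<Prod>p\<leftarrow>map gate_pair gs. pair_sign p x) = (\<lambda>x. \<Prod>p\<in>T. pair_sign p x)"
    using prod_list_involutions_eq_prod_subset[where ks = "map gate_pair gs"] by metis
  have "gate_pair ` set gs \<subseteq> {..<n} \<times> {..<n}"
    using valid gate_pair_valid by blast
  with T(1) have "T \<subseteq> {..<n} \<times> {..<n}"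
    by simp
  moreover have "(\<lambda>x. \<Prod>g\<leftarrow>gs. pair_sign (gate_pair g) x) = (\<lambda>x. \<Prod>p\<in>T. pair_sign p x)"
    using T(2) by (simp add: comp_def)
  then have "\<Phi> = unitary_channel n (hadamard_conj n (\<lambda>x. \<Prod>p\<in>T. pair_sign p x))"
    by (simp only: \<Phi> U_of_eq_hadamard_conj)
  ultimately show "\<Phi> \<in> (\<lambda>T. unitary_channel n (hadamard_conj n (\<lambda>x. \<Prod>p\<in>T. pair_sign p x)))
      ` Pow ({..<n} \<times> {..<n})"
    by blast
qed

lemma finite_chanI: "finite (chanI n)"
  by (rule finite_subset[OF chanI_subset]) simp

lemma card_chanI_le: "card (chanI n) \<le> 2 ^ (n * n)"
proof -
  have "card (chanI n) \<le> card (Pow ({..<n} \<times> {..<n}))"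
    by (rule order.trans[OF card_mono[OF _ chanI_subset] card_image_le]) simp_all
  also have "\<dots> = 2 ^ (n * n)"
    by (simp add: card_Pow card_cartesian_product)
  finally show ?thesis .
qed

lemma chanI_nonempty:
  assumes "2 \<le> n"
  shows "chanI n \<noteq> {}"
proof -
  have "unitary_channel n (U_of n [GCZ 0 1]) \<in> chanI n"
    using assms unfolding chanI_def by (intro CollectI exI[of _ "[GCZ 0 1]"]) simp
  then show ?thesis
    by blast
qed

lemma card_Fclass_le: "card (Fclass n) \<le> 2 ^ (n * n)"
  unfolding Fclass_def using card_image_le[OF finite_chanI] card_chanI_le order.trans by blast

theorem mainTheorem8:
  shows "\<exists>C::real. \<forall>(n::nat) (S::(bits \<times> bits) list).
     n \<ge> 2 \<longrightarrow> length S \<ge> 1 \<longrightarrow>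
     (\<forall>z\<in>set S. fst z \<in> bitvecs n \<and> snd z \<in> bitvecs n) \<longrightarrow>
     emp_rademacher S (Fclass n)
       \<le> C * real n / sqrt (real (length S)) *
          (SUP \<Phi>\<in>chanI n. Max ((\<lambda>z. \<bar>fPhi n \<Phi> z\<bar>) ` set S))"
proof (intro exI[of _ "sqrt 2"] allI impI)
  fix n :: nat and S :: "(bits \<times> bits) list"
  \<comment> \<open>The bound holds for arbitrary samples.\<close>
  assume n: "n \<ge> 2" and S: "length S \<ge> 1"
  define M where "M = (SUP \<Phi>\<in>chanI n. Max ((\<lambda>z. \<bar>fPhi n \<Phi> z\<bar>) ` set S))"
  have bound: "\<bar>g (S ! i)\<bar> \<le> M" if g: "g \<in> Fclass n" and i: "i < length S" for g i
  proof -
    obtain \<Phi> where \<Phi>: "\<Phi> \<in> chanI n" "g = fPhi n \<Phi>"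
      using g unfolding Fclass_def by blast
    have "\<bar>g (S ! i)\<bar> \<le> Max ((\<lambda>z. \<bar>fPhi n \<Phi> z\<bar>) ` set S)"
      using \<Phi>(2) i by (intro Max_ge) auto
    also have "\<dots> \<le> M"
      unfolding M_def using \<Phi>(1) finite_chanI by (intro cSUP_upper) auto
    finally show ?thesis .
  qed
  have "finite (Fclass n)" "Fclass n \<noteq> {}" "S \<noteq> []" "n * n > 0"
    using finite_chanI chanI_nonempty[OF n] n S by (auto simp: Fclass_def)
  then have "emp_rademacher S (Fclass n) \<le> sqrt (2 * real (n * n)) * M / sqrt (length S)"
    using massart_finite_class card_Fclass_le bound by blast
  then show "emp_rademacher S (Fclass n) \<le> sqrt 2 * real n / sqrt (length S) * M"
    by (simp add: real_sqrt_mult)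
qed

end
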